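(* There exist constants $c>0$ and $\alpha_0\in(0,\frac12]$ such that for every $\alpha\in(0,\alpha_0]$, every Any-Fit algorithm $A$ for stochastic bin packing of scaled Bernoulli items with overflow bound $\alpha$, and every positive integer $N$, there is an instance of independent items $X_i\sim\operatorname{Ber}(p_i,s_i)$ with $p_i\in(0,1]$, $s_i\in(0,1]$, whose optimal viable packing uses $OPT\ge N$ bins and on which $A$ uses at least $c\,\alpha^{-1/2}\cdot OPT$ bins. In other words, every Any-Fit algorithm has approximation ratio $\Omega(\alpha^{-1/2})$.
   Context: $X\sim\operatorname{Ber}(p,s)$ means $X=s$ with probability $p$ and $0$ otherwise. Bins have capacity $1$; a set of independent items in a bin is viable if its sum $B$ satisfies $\mathbb{P}(B>1)\le\alpha$, and a packing is viable if all bins are; $OPT$ is the minimum number of bins of a viable packing. An Any-Fit algorithm processes items online in the given order, always keeps every bin viable, and opens a new bin for the current item only if adding it to any already opened bin would make that bin non-viable. *)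

theory Defs
  imports Complex_Main
begin

text \<open>An item X ~ Ber(p,s) is represented by the pair (p, s):
  X = s with probability p and 0 otherwise.\<close>
type_synonym item = "real \<times> real"

definition valid_item :: "item \<Rightarrow> bool" where
  "valid_item x \<longleftrightarrow> 0 < fst x \<and> fst x \<le> 1 \<and> 0 < snd x \<and> snd x \<le> 1"

text \<open>P(B > 1) for B the sum of the independent items in the list:
  sum over the set S of items that take their nonzero value.\<close>
definition overflow_prob :: "item list \<Rightarrow> real" where
  "overflow_prob xs =
     (\<Sum>S\<in>Pow {..<length xs}.
        (\<Prod>i\<in>S. fst (xs ! i)) * (\<Prod>i\<in>{..<length xs} - S. 1 - fst (xs ! i))
        * (if (\<Sum>i\<in>S. snd (xs ! i)) > 1 then 1 else 0))"

definition viable :: "real \<Rightarrow> item list \<Rightarrow> bool" where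
  "viable \<alpha> xs \<longleftrightarrow> overflow_prob xs \<le> \<alpha>"

definition viable_packing :: "real \<Rightarrow> item list \<Rightarrow> nat \<Rightarrow> (nat \<Rightarrow> nat) \<Rightarrow> bool" where
  "viable_packing \<alpha> xs k f \<longleftrightarrow>
     (\<forall>i<length xs. f i < k) \<and>
     (\<forall>j<k. viable \<alpha> [xs ! i. i \<leftarrow> [0..<length xs], f i = j])"

definition OPT :: "real \<Rightarrow> item list \<Rightarrow> nat" where
  "OPT \<alpha> xs = (LEAST k. \<exists>f. viable_packing \<alpha> xs k f)"

text \<open>A history records the items processed so far,
  each with the index of the bin it was put in (bins numbered 0,1,... in opening order).
  An algorithm maps the history and the current item to a bin index; an index
  \<ge> the number of open bins means "open a new bin".\<close>
type_synonym history = "(item \<times> nat) list"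
type_synonym algorithm = "history \<Rightarrow> item \<Rightarrow> nat"

definition nbins :: "history \<Rightarrow> nat" where
  "nbins h = (if h = [] then 0 else Suc (Max (snd ` set h)))"

definition bin :: "history \<Rightarrow> nat \<Rightarrow> item list" where
  "bin h j = [fst e. e \<leftarrow> h, snd e = j]"

fun run :: "algorithm \<Rightarrow> history \<Rightarrow> item list \<Rightarrow> history" where
  "run A h [] = h"
| "run A h (x # xs) = run A (h @ [(x, min (A h x) (nbins h))]) xs"

definition any_fit :: "real \<Rightarrow> algorithm \<Rightarrow> bool" where
  "any_fit \<alpha> A \<longleftrightarrow>
     (\<forall>h x. valid_item x \<longrightarrow>
        (A h x < nbins h \<longrightarrow> viable \<alpha> (bin h (A h x) @ [x])) \<and>
        (nbins h \<le> A h x \<longrightarrow> (\<forall>j<nbins h. \<not> viable \<alpha> (bin h j @ [x]))))"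

definition bins_used :: "algorithm \<Rightarrow> item list \<Rightarrow> nat" where
  "bins_used A xs = nbins (run A [] xs)"

end

theory Submission
  imports Defs
begin

text \<open>Feed an Any-Fit algorithm N full items Ber(1,1), followed by n pairs consisting of a rare
  item Ber(2\<alpha>,1) and a small item Ber(1/2,1/n). A full item conflicts with every item, and a bin
  holding a rare and a small item accepts neither another rare nor another small item, so
  Any-Fit opens N + n bins. An optimal packing puts each full item alone, all small items
  (total size 1) into one bin, and the rare items into groups of k \<approx> 1/(2\<surd>\<alpha>): since every size
  is at most 1, an overflow needs two nonzero items, so such a group overflows with probability
  at most k^2 (2\<alpha>)^2 \<le> \<alpha>. Hence OPT \<le> N + 2 + 4\<surd>\<alpha> n, and n \<ge> (N + 2)/\<surd>\<alpha> gives the ratio.\<close>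

lemma sum_Pow_supset_eq_prod:
  fixes p q :: "'a \<Rightarrow> 'b::comm_semiring_1"
  assumes "finite I" "T \<subseteq> I"
  shows "(\<Sum>S\<in>Pow I. (\<Prod>i\<in>S. p i) * (\<Prod>i\<in>I - S. q i) * (if T \<subseteq> S then 1 else 0))
       = (\<Prod>i\<in>T. p i) * (\<Prod>i\<in>I - T. p i + q i)"
proof -
  define q' where "q' i = (if i \<in> T then 0 else q i)" for i
  have "(\<Prod>i\<in>I. p i + q' i) = (\<Sum>S\<in>Pow I. (\<Prod>i\<in>S. p i) * (\<Prod>i\<in>I - S. q' i))"
    using assms(1) by (rule prod_add)
  also have "\<dots> = (\<Sum>S\<in>Pow I. (\<Prod>i\<in>S. p i) * (\<Prod>i\<in>I - S. q i) * (if T \<subseteq> S then 1 else 0))"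
  proof (rule sum.cong[OF refl])
    fix S assume S: "S \<in> Pow I"
    show "(\<Prod>i\<in>S. p i) * (\<Prod>i\<in>I - S. q' i) = (\<Prod>i\<in>S. p i) * (\<Prod>i\<in>I - S. q i) * (if T \<subseteq> S then 1 else 0)"
    proof (cases "T \<subseteq> S")
      case True
      then have "(\<Prod>i\<in>I - S. q' i) = (\<Prod>i\<in>I - S. q i)" by (intro prod.cong) (auto simp: q'_def)
      then show ?thesis using True by simp
    next
      case False
      then obtain t where "t \<in> T" "t \<notin> S" by auto
      then have "(\<Prod>i\<in>I - S. q' i) = 0" using assms by (intro prod_zero) (auto simp: q'_def)
      then show ?thesis using False by simp
    qed
  qed
  finally have "(\<Prod>i\<in>I. p i + q' i) = \<dots>" .
  moreover have "(\<Prod>i\<in>I. p i + q' i) = (\<Prod>i\<in>T. p i) * (\<Prod>i\<in>I - T. p i + q i)"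
    using assms prod.subset_diff[of T I "\<lambda>i. p i + q' i"] by (simp add: q'_def mult.commute)
  ultimately show ?thesis by simp
qed

definition outcome_prob :: "item list \<Rightarrow> nat set \<Rightarrow> real" where
  "outcome_prob xs S = (\<Prod>i\<in>S. fst (xs ! i)) * (\<Prod>i\<in>{..<length xs} - S. 1 - fst (xs ! i))"

lemma overflow_prob_eq_sum_outcome_prob:
  "overflow_prob xs = (\<Sum>S\<in>Pow {..<length xs}.
     outcome_prob xs S * (if (\<Sum>i\<in>S. snd (xs ! i)) > 1 then 1 else 0))"
  unfolding overflow_prob_def outcome_prob_def by simp

lemma sum_outcome_prob_supset:
  assumes "T \<subseteq> {..<length xs}"
  shows "(\<Sum>S\<in>Pow {..<length xs}. outcome_prob xs S * (if T \<subseteq> S then 1 else 0)) = (\<Prod>i\<in>T. fst (xs ! i))"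
  using sum_Pow_supset_eq_prod[OF _ assms, of "\<lambda>i. fst (xs ! i)" "\<lambda>i. 1 - fst (xs ! i)"]
  unfolding outcome_prob_def by simp

lemma valid_item_nth:
  assumes "\<forall>x\<in>set xs. valid_item x" "i < length xs"
  shows "0 < fst (xs ! i)" "fst (xs ! i) \<le> 1" "0 < snd (xs ! i)" "snd (xs ! i) \<le> 1"
  using assms nth_mem[of i xs] unfolding valid_item_def by auto

lemma outcome_prob_nonneg:
  assumes "\<forall>x\<in>set xs. valid_item x" "S \<subseteq> {..<length xs}"
  shows "0 \<le> outcome_prob xs S"
  unfolding outcome_prob_def using assms valid_item_nth[OF assms(1)]
  by (intro mult_nonneg_nonneg prod_nonneg) (auto intro: less_imp_le)

lemma sum_size_mono:
  assumes "\<forall>x\<in>set xs. valid_item x" "T \<subseteq> S" "S \<subseteq> {..<length xs}"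
  shows "(\<Sum>i\<in>T. snd (xs ! i)) \<le> (\<Sum>i\<in>S. snd (xs ! i))"
proof (rule sum_mono2)
  show "finite S" using assms(3) by (rule finite_subset) simp
  show "0 \<le> snd (xs ! i)" if "i \<in> S - T" for i
    using that assms(3) valid_item_nth(3)[OF assms(1)] by (auto intro: less_imp_le)
qed (use assms(2) in simp)

lemma prod_le_overflow_prob:
  assumes val: "\<forall>x\<in>set xs. valid_item x" and T: "T \<subseteq> {..<length xs}"
    and size: "(\<Sum>i\<in>T. snd (xs ! i)) > 1"
  shows "(\<Prod>i\<in>T. fst (xs ! i)) \<le> overflow_prob xs"
  unfolding sum_outcome_prob_supset[OF T, symmetric] overflow_prob_eq_sum_outcome_prob
proof (intro sum_mono mult_left_mono)
  fix S assume S: "S \<in> Pow {..<length xs}"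
  show "(if T \<subseteq> S then 1 else 0) \<le> (if (\<Sum>i\<in>S. snd (xs ! i)) > 1 then 1 else 0 :: real)"
    using sum_size_mono[OF val _, of T S] S size by auto
  show "0 \<le> outcome_prob xs S" using outcome_prob_nonneg[OF val] S by simp
qed

lemma inclusion_exclusion_le_overflow_prob:
  assumes val: "\<forall>x\<in>set xs. valid_item x"
    and T1: "T1 \<subseteq> {..<length xs}" and T2: "T2 \<subseteq> {..<length xs}"
    and size1: "(\<Sum>i\<in>T1. snd (xs ! i)) > 1" and size2: "(\<Sum>i\<in>T2. snd (xs ! i)) > 1"
  shows "(\<Prod>i\<in>T1. fst (xs ! i)) + (\<Prod>i\<in>T2. fst (xs ! i)) - (\<Prod>i\<in>T1 \<union> T2. fst (xs ! i))
    \<le> overflow_prob xs"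
proof -
  let ?I = "{..<length xs}"
  let ?ind = "\<lambda>T S. if T \<subseteq> S then 1 else 0 :: real"
  have "(\<Prod>i\<in>T1. fst (xs ! i)) + (\<Prod>i\<in>T2. fst (xs ! i)) - (\<Prod>i\<in>T1 \<union> T2. fst (xs ! i))
    = (\<Sum>S\<in>Pow ?I. outcome_prob xs S * (?ind T1 S + ?ind T2 S - ?ind (T1 \<union> T2) S))"
    using sum_outcome_prob_supset[OF T1] sum_outcome_prob_supset[OF T2]
      sum_outcome_prob_supset[of "T1 \<union> T2" xs] T1 T2
    by (simp add: algebra_simps sum.distrib sum_subtractf)
  also have "\<dots> \<le> overflow_prob xs"
    unfolding overflow_prob_eq_sum_outcome_prob
  proof (intro sum_mono mult_left_mono)
    fix S assume S: "S \<in> Pow ?I"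
    show "?ind T1 S + ?ind T2 S - ?ind (T1 \<union> T2) S \<le> (if (\<Sum>i\<in>S. snd (xs ! i)) > 1 then 1 else 0)"
      using sum_size_mono[OF val _, of T1 S] sum_size_mono[OF val _, of T2 S] S size1 size2 by auto
    show "0 \<le> outcome_prob xs S" using outcome_prob_nonneg[OF val] S by simp
  qed
  finally show ?thesis .
qed

lemma overflow_prob_le_prod:
  assumes val: "\<forall>x\<in>set xs. valid_item x" and T: "T \<subseteq> {..<length xs}"
    and overflow: "\<And>S. S \<subseteq> {..<length xs} \<Longrightarrow> (\<Sum>i\<in>S. snd (xs ! i)) > 1 \<Longrightarrow> T \<subseteq> S"
  shows "overflow_prob xs \<le> (\<Prod>i\<in>T. fst (xs ! i))"
  unfolding sum_outcome_prob_supset[OF T, symmetric] overflow_prob_eq_sum_outcome_prob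
  using overflow outcome_prob_nonneg[OF val] by (intro sum_mono) auto

lemma overflow_prob_eq_0:
  assumes val: "\<forall>x\<in>set xs. valid_item x" and size: "(\<Sum>i<length xs. snd (xs ! i)) \<le> 1"
  shows "overflow_prob xs = 0"
proof -
  have "\<not> (\<Sum>i\<in>S. snd (xs ! i)) > 1" if "S \<subseteq> {..<length xs}" for S
    using sum_size_mono[OF val that] size by simp
  then show ?thesis
    unfolding overflow_prob_def by (intro sum.neutral ballI) simp
qed

lemma overflow_prob_le_sum_pairs:
  assumes val: "\<forall>x\<in>set xs. valid_item x"
  shows "overflow_prob xs \<le> (\<Sum>i<length xs. \<Sum>j\<in>{..<length xs} - {i}. fst (xs ! i) * fst (xs ! j))"
proof -
  let ?I = "{..<length xs}"
  let ?pairs = "\<lambda>S. \<Sum>i\<in>?I. \<Sum>j\<in>?I - {i}. if {i, j} \<subseteq> S then 1 else 0 :: real"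
  have indicator_le: "(if (\<Sum>i\<in>S. snd (xs ! i)) > 1 then 1 else 0) \<le> ?pairs S"
    if S: "S \<subseteq> ?I" for S
  proof (cases "(\<Sum>i\<in>S. snd (xs ! i)) > 1")
    case True
    have "\<not> (S = {} \<or> (\<exists>a. S = {a}))"
      using True S valid_item_nth(4)[OF val] by (auto simp: not_less[symmetric])
    then obtain i j where ij: "i \<in> S" "j \<in> S" "i \<noteq> j" by blast
    have "1 \<le> (\<Sum>j'\<in>?I - {i}. if {i, j'} \<subseteq> S then 1 else 0 :: real)"
      using member_le_sum[of j "?I - {i}" "\<lambda>j'. if {i, j'} \<subseteq> S then 1 else 0 :: real"] ij S by auto
    also have "\<dots> \<le> ?pairs S"
      using ij S by (intro member_le_sum[where i = i] sum_nonneg) auto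
    finally show ?thesis using True by simp
  qed (simp add: sum_nonneg)
  have "overflow_prob xs \<le> (\<Sum>S\<in>Pow ?I. outcome_prob xs S * ?pairs S)"
    unfolding overflow_prob_eq_sum_outcome_prob
    using indicator_le outcome_prob_nonneg[OF val] by (intro sum_mono mult_left_mono) auto
  also have "\<dots> = (\<Sum>i\<in>?I. \<Sum>j\<in>?I - {i}. \<Sum>S\<in>Pow ?I. outcome_prob xs S * (if {i, j} \<subseteq> S then 1 else 0))"
    by (simp add: sum_distrib_left sum.swap[of _ "Pow ?I"])
  also have "\<dots> = (\<Sum>i\<in>?I. \<Sum>j\<in>?I - {i}. fst (xs ! i) * fst (xs ! j))"
  proof (intro sum.cong refl)
    fix i j assume "i \<in> ?I" "j \<in> ?I - {i}"
    then show "(\<Sum>S\<in>Pow ?I. outcome_prob xs S * (if {i, j} \<subseteq> S then 1 else 0)) = fst (xs ! i) * fst (xs ! j)"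
      using sum_outcome_prob_supset[of "{i, j}" xs] by auto
  qed
  finally show ?thesis .
qed

lemma viable_of_small_sizes:
  assumes "\<forall>y\<in>set ys. valid_item y" "\<forall>y\<in>set ys. snd y \<le> s" "real (length ys) * s \<le> 1" "0 \<le> \<alpha>"
  shows "viable \<alpha> ys"
proof -
  have "(\<Sum>i<length ys. snd (ys ! i)) \<le> real (length ys) * s"
    using assms(2) sum_bounded_above[of "{..<length ys}" "\<lambda>i. snd (ys ! i)" s] by simp
  then show ?thesis
    using assms overflow_prob_eq_0 unfolding viable_def by simp
qed

lemma viable_of_small_probs:
  assumes val: "\<forall>y\<in>set ys. valid_item y" and p: "\<forall>y\<in>set ys. fst y \<le> p" "0 \<le> p"
    and "real (length ys) ^ 2 * p ^ 2 \<le> \<alpha>"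
  shows "viable \<alpha> ys"
proof -
  let ?I = "{..<length ys}"
  have "(\<Sum>i\<in>?I. \<Sum>j\<in>?I - {i}. fst (ys ! i) * fst (ys ! j)) \<le> (\<Sum>i\<in>?I. \<Sum>j\<in>?I. p * p)"
  proof (intro sum_mono)
    fix i assume i: "i \<in> ?I"
    have "(\<Sum>j\<in>?I - {i}. fst (ys ! i) * fst (ys ! j)) \<le> (\<Sum>j\<in>?I - {i}. p * p)"
      using i p valid_item_nth(1)[OF val] by (intro sum_mono mult_mono) (auto intro: less_imp_le)
    also have "\<dots> \<le> (\<Sum>j\<in>?I. p * p)" using p by (intro sum_mono2) auto
    finally show "(\<Sum>j\<in>?I - {i}. fst (ys ! i) * fst (ys ! j)) \<le> (\<Sum>j\<in>?I. p * p)" .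
  qed
  also have "\<dots> = real (length ys) ^ 2 * p ^ 2" by (simp add: power2_eq_square)
  finally show ?thesis
    using overflow_prob_le_sum_pairs[OF val] assms(4) unfolding viable_def by simp
qed

lemma not_viable_of_overflowing_pair:
  assumes val: "\<forall>y\<in>set ys. valid_item y" and "a < length ys" "b < length ys" "a \<noteq> b"
    and "snd (ys ! a) + snd (ys ! b) > 1" "fst (ys ! a) * fst (ys ! b) > \<alpha>"
  shows "\<not> viable \<alpha> ys"
  using prod_le_overflow_prob[OF val, of "{a, b}"] assms unfolding viable_def by auto

lemma viable_pair:
  assumes "valid_item a" "valid_item b" "fst a * fst b \<le> \<alpha>"
  shows "viable \<alpha> [a, b]"
proof -
  have "overflow_prob [a, b] \<le> (\<Prod>i\<in>{0, 1}. fst ([a, b] ! i))"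
  proof (rule overflow_prob_le_prod)
    fix S assume S: "S \<subseteq> {..<length [a, b]}" and "(\<Sum>i\<in>S. snd ([a, b] ! i)) > 1"
    moreover have "S \<subseteq> {0, 1}" using S by auto
    then have "S = {} \<or> S = {0} \<or> S = {1} \<or> S = {0, 1}" by blast
    ultimately show "{0, 1} \<subseteq> S" using assms unfolding valid_item_def by auto
  qed (use assms in auto)
  then show ?thesis using assms unfolding viable_def by simp
qed

definition history_of :: "item list list \<Rightarrow> history" where
  "history_of L = concat (map (\<lambda>j. map (\<lambda>x. (x, j)) (L ! j)) [0..<length L])"

lemma history_of_Nil [simp]: "history_of [] = []"
  by (simp add: history_of_def)

lemma history_of_snoc: "history_of (L @ [b]) = history_of L @ map (\<lambda>x. (x, length L)) b"
  unfolding history_of_def by (auto simp: nth_append intro!: arg_cong[where f = concat] map_cong)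

lemma bin_history_of: "bin (history_of L) j = (if j < length L then L ! j else [])"
proof (induction L rule: rev_induct)
  case (snoc b L)
  have "bin (h @ map (\<lambda>x. (x, m)) b) j = bin h j @ (if j = m then b else [])" for h m
    unfolding bin_def by (induction b) auto
  then show ?case using snoc.IH by (auto simp: history_of_snoc nth_append)
qed (simp add: bin_def)

lemma nbins_history_of:
  assumes "[] \<notin> set L"
  shows "nbins (history_of L) = length L"
proof -
  have "snd ` set (history_of L) = {..<length L}"
    using assms
  proof (induction L rule: rev_induct)
    case (snoc b L)
    then have "snd ` set (map (\<lambda>x. (x, length L)) b) = {length L}" by (cases b) auto
    then show ?case using snoc by (auto simp: history_of_snoc image_Un lessThan_Suc)
  qed simp
  moreover have "L \<noteq> [] \<Longrightarrow> Max {..<length L} = length L - 1"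
    by (intro Max_eqI) auto
  ultimately show ?thesis unfolding nbins_def by (cases "L = []") auto
qed

lemma run_any_fit_opens_bin:
  assumes A: "any_fit \<alpha> A" and x: "valid_item x" and L: "[] \<notin> set L"
    and no_fit: "\<forall>b\<in>set L. \<not> viable \<alpha> (b @ [x])"
  shows "run A (history_of L) (x # xs) = run A (history_of (L @ [[x]])) xs"
proof -
  let ?h = "history_of L"
  have "\<not> A ?h x < nbins ?h"
  proof
    assume lt: "A ?h x < nbins ?h"
    then have "viable \<alpha> (bin ?h (A ?h x) @ [x])" using A x unfolding any_fit_def by blast
    then show False using no_fit lt nbins_history_of[OF L] by (simp add: bin_history_of)
  qed
  then show ?thesis using nbins_history_of[OF L] by (simp add: history_of_snoc)
qed

lemma run_any_fit_joins_last_bin: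
  assumes A: "any_fit \<alpha> A" and x: "valid_item x" and L: "[] \<notin> set (L @ [b])"
    and no_fit: "\<forall>b\<in>set L. \<not> viable \<alpha> (b @ [x])" and fit: "viable \<alpha> (b @ [x])"
  shows "run A (history_of (L @ [b])) (x # xs) = run A (history_of (L @ [b @ [x]])) xs"
proof -
  let ?h = "history_of (L @ [b])"
  have nbins: "nbins ?h = Suc (length L)" using nbins_history_of[OF L] by simp
  have lt: "A ?h x < nbins ?h"
  proof (rule ccontr)
    assume "\<not> A ?h x < nbins ?h"
    then have "nbins ?h \<le> A ?h x" by simp
    then have "\<forall>j<nbins ?h. \<not> viable \<alpha> (bin ?h j @ [x])" using A x unfolding any_fit_def by blast
    then have "\<not> viable \<alpha> (bin ?h (length L) @ [x])" using nbins by simp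
    then show False using fit by (simp add: bin_history_of)
  qed
  then have "viable \<alpha> (bin ?h (A ?h x) @ [x])" using A x unfolding any_fit_def by blast
  then have "A ?h x = length L"
    using lt nbins no_fit by (cases "A ?h x < length L") (auto simp: bin_history_of nth_append)
  then show ?thesis using lt by (simp add: history_of_snoc)
qed

lemma list_comprehension_eq_map_filter: "[g i. i \<leftarrow> ns, P i] = map g (filter P ns)"
  by (induction ns) auto

abbreviation packing_bin :: "item list \<Rightarrow> (nat \<Rightarrow> nat) \<Rightarrow> nat \<Rightarrow> item list" where
  "packing_bin xs f j \<equiv> [xs ! i. i \<leftarrow> [0..<length xs], f i = j]"

lemma length_packing_bin: "length (packing_bin xs f j) = card {i. i < length xs \<and> f i = j}"
  by (simp add: list_comprehension_eq_map_filter length_filter_conv_card cong: conj_cong)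

lemma set_packing_bin: "set (packing_bin xs f j) = (!) xs ` {i. i < length xs \<and> f i = j}"
  by (auto simp: list_comprehension_eq_map_filter)

lemma valid_item_packing_bin:
  "\<forall>x\<in>set xs. valid_item x \<Longrightarrow> \<forall>y\<in>set (packing_bin xs f j). valid_item y"
  by (auto simp: set_packing_bin)

lemma OPT_le: "viable_packing \<alpha> xs k f \<Longrightarrow> OPT \<alpha> xs \<le> k"
  unfolding OPT_def by (blast intro: Least_le)

lemma card_le_OPT:
  assumes packing: "viable_packing \<alpha> xs k f" and val: "\<forall>x\<in>set xs. valid_item x"
    and I: "I \<subseteq> {..<length xs}"
    and conflict: "\<And>i i'. i \<in> I \<Longrightarrow> i' \<in> I \<Longrightarrow> i \<noteq> i' \<Longrightarrow>
      snd (xs ! i) + snd (xs ! i') > 1 \<and> fst (xs ! i) * fst (xs ! i') > \<alpha>"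
  shows "card I \<le> OPT \<alpha> xs"
proof (rule ccontr)
  assume "\<not> card I \<le> OPT \<alpha> xs"
  obtain g where g: "viable_packing \<alpha> xs (OPT \<alpha> xs) g"
    using LeastI_ex[of "\<lambda>k. \<exists>g. viable_packing \<alpha> xs k g"] packing unfolding OPT_def by blast
  have "g ` I \<subseteq> {..<OPT \<alpha> xs}" using g I unfolding viable_packing_def by auto
  then have "card (g ` I) < card I"
    using \<open>\<not> card I \<le> OPT \<alpha> xs\<close> card_mono[of "{..<OPT \<alpha> xs}" "g ` I"] by simp
  then obtain i i' where ii': "i \<in> I" "i' \<in> I" "i \<noteq> i'" "g i = g i'"
    using pigeonhole unfolding inj_on_def by blast
  let ?idx = "filter (\<lambda>l. g l = g i) [0..<length xs]"
  let ?bin = "packing_bin xs g (g i)"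
  obtain a b where ab: "a < length ?idx" "?idx ! a = i" "b < length ?idx" "?idx ! b = i'"
  proof -
    have "i \<in> set ?idx" "i' \<in> set ?idx" using ii' I by auto
    then show thesis using that by (metis in_set_conv_nth)
  qed
  have "\<not> viable \<alpha> ?bin"
    unfolding list_comprehension_eq_map_filter
  proof (rule not_viable_of_overflowing_pair[where a = a and b = b])
    show "\<forall>y\<in>set (map ((!) xs) ?idx). valid_item y" using val by auto
  qed (use ab ii' conflict in auto)
  moreover have "viable \<alpha> ?bin"
    using g ii' I unfolding viable_packing_def by auto
  ultimately show False by contradiction
qed

definition full_item :: item where "full_item = (1, 1)"
definition rare_item :: "real \<Rightarrow> item" where "rare_item \<alpha> = (2 * \<alpha>, 1)"
definition small_item :: "nat \<Rightarrow> item" where "small_item n = (1 / 2, 1 / real n)"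

definition bad_instance :: "real \<Rightarrow> nat \<Rightarrow> nat \<Rightarrow> item list" where
  "bad_instance \<alpha> n N = replicate N full_item @ concat (replicate n [rare_item \<alpha>, small_item n])"

lemma nth_concat_replicate_pair:
  "i < 2 * n \<Longrightarrow> concat (replicate n [a, b]) ! i = (if even i then a else b)"
proof (induction n arbitrary: i)
  case (Suc n)
  show ?case
  proof (cases "i < 2")
    case True
    then show ?thesis by (auto simp: nth_append less_2_cases_iff)
  next
    case False
    then have "even (i - 2) = even i" by auto
    then show ?thesis using False Suc by (simp add: nth_append)
  qed
qed simp

lemma length_bad_instance: "length (bad_instance \<alpha> n N) = N + 2 * n"
  by (simp add: bad_instance_def length_concat sum_list_replicate)

lemma nth_bad_instance:
  "i < N + 2 * n \<Longrightarrow> bad_instance \<alpha> n N ! i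
    = (if i < N then full_item else if even (i - N) then rare_item \<alpha> else small_item n)"
  by (auto simp: bad_instance_def nth_append nth_concat_replicate_pair)

definition bad_instance_packing :: "nat \<Rightarrow> nat \<Rightarrow> nat \<Rightarrow> nat \<Rightarrow> nat" where
  "bad_instance_packing n k N i =
    (if i < N then i else if even (i - N) then N + (i - N) div 2 div k else N + n div k + 1)"

lemma bad_instance_packing_full_bin:
  "j < N \<Longrightarrow> {i. i < N + 2 * n \<and> bad_instance_packing n k N i = j} = {j}"
  by (auto simp: bad_instance_packing_def)

lemma bad_instance_packing_rare_bin:
  assumes "0 < k" "N \<le> j" "j \<le> N + n div k"
  shows "{i. i < N + 2 * n \<and> bad_instance_packing n k N i = j}
    \<subseteq> (\<lambda>r. N + 2 * r) ` {(j - N) * k..<(j - N) * k + k}"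
proof
  fix i assume "i \<in> {i. i < N + 2 * n \<and> bad_instance_packing n k N i = j}"
  then have "\<not> i < N" "even (i - N)" and r: "(i - N) div 2 div k = j - N"
    using assms by (auto simp: bad_instance_packing_def split: if_splits)
  moreover have "(i - N) div 2 \<in> {(j - N) * k..<(j - N) * k + k}"
    using r div_times_less_eq_dividend[of "(i - N) div 2" k] dividend_less_div_times[OF assms(1), of "(i - N) div 2"]
    by auto
  ultimately show "i \<in> (\<lambda>r. N + 2 * r) ` {(j - N) * k..<(j - N) * k + k}"
    by (intro image_eqI[where x = "(i - N) div 2"]) auto
qed

lemma bad_instance_packing_small_bin:
  "{i. i < N + 2 * n \<and> bad_instance_packing n k N i = N + n div k + 1}
    \<subseteq> (\<lambda>r. N + 2 * r + 1) ` {..<n}"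
proof
  fix i assume i: "i \<in> {i. i < N + 2 * n \<and> bad_instance_packing n k N i = N + n div k + 1}"
  then have "(i - N) div 2 div k \<le> n div k"
    by (intro div_le_mono) auto
  then have "\<not> i < N" "odd (i - N)"
    using i by (auto simp: bad_instance_packing_def split: if_splits)
  then obtain r where "i = N + 2 * r + 1" by (metis oddE le_add_diff_inverse not_less add.assoc)
  then show "i \<in> (\<lambda>r. N + 2 * r + 1) ` {..<n}" using i by auto
qed

context
  fixes \<alpha> :: real and n :: nat
  assumes \<alpha>: "0 < \<alpha>" "\<alpha> < 1 / 2" and n: "0 < n"
begin

lemma valid_items: "valid_item full_item" "valid_item (rare_item \<alpha>)" "valid_item (small_item n)"
  using \<alpha> n by (auto simp: valid_item_def full_item_def rare_item_def small_item_def)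

lemma valid_item_bad_instance: "\<forall>x\<in>set (bad_instance \<alpha> n N). valid_item x"
  using valid_items by (auto simp: bad_instance_def)

lemma not_viable_full_item_pair:
  assumes "valid_item x" "\<alpha> < fst x"
  shows "\<not> viable \<alpha> [full_item, x]"
  using assms by (intro not_viable_of_overflowing_pair[where a = 0 and b = 1])
    (auto simp: full_item_def valid_item_def)

lemma not_viable_full_rare: "\<not> viable \<alpha> [full_item, rare_item \<alpha>]"
  and not_viable_full_small: "\<not> viable \<alpha> [full_item, small_item n]"
  and not_viable_full_full: "\<not> viable \<alpha> [full_item, full_item]"
  using \<alpha> valid_items not_viable_full_item_pair[of "rare_item \<alpha>"]
    not_viable_full_item_pair[of "small_item n"] not_viable_full_item_pair[of full_item]
  by (simp_all add: full_item_def rare_item_def small_item_def)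

lemma viable_rare_small: "viable \<alpha> [rare_item \<alpha>, small_item n]"
  using \<alpha> valid_items by (intro viable_pair) (auto simp: rare_item_def small_item_def)

text \<open>A rare item overflows together with a small one with probability \<alpha>; two such
  overflowing pairs in one bin push the overflow probability above \<alpha>.\<close>
lemma not_viable_rare_small_rare: "\<not> viable \<alpha> [rare_item \<alpha>, small_item n, rare_item \<alpha>]"
proof -
  let ?xs = "[rare_item \<alpha>, small_item n, rare_item \<alpha>]"
  have "(\<Prod>i\<in>{0, 1}. fst (?xs ! i)) + (\<Prod>i\<in>{1, 2}. fst (?xs ! i)) - (\<Prod>i\<in>{0, 1} \<union> {1, 2}. fst (?xs ! i))
    \<le> overflow_prob ?xs"
    using valid_items n by (intro inclusion_exclusion_le_overflow_prob)
      (auto simp: rare_item_def small_item_def)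
  moreover have "{0, 1} \<union> {1, 2::nat} = {0, 1, 2}" by auto
  moreover have "\<alpha> * (2 * \<alpha>) < \<alpha> * 1" using \<alpha> by (intro mult_strict_left_mono) auto
  ultimately show ?thesis
    unfolding viable_def by (simp add: rare_item_def small_item_def)
qed

lemma not_viable_rare_small_small: "\<not> viable \<alpha> [rare_item \<alpha>, small_item n, small_item n]"
proof -
  let ?xs = "[rare_item \<alpha>, small_item n, small_item n]"
  have "(\<Prod>i\<in>{0, 1}. fst (?xs ! i)) + (\<Prod>i\<in>{0, 2}. fst (?xs ! i)) - (\<Prod>i\<in>{0, 1} \<union> {0, 2}. fst (?xs ! i))
    \<le> overflow_prob ?xs"
    using valid_items n by (intro inclusion_exclusion_le_overflow_prob)
      (auto simp: rare_item_def small_item_def)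
  moreover have "{0, 1} \<union> {0, 2::nat} = {0, 1, 2}" by auto
  ultimately show ?thesis
    using \<alpha> unfolding viable_def by (simp add: rare_item_def small_item_def)
qed

lemma run_full_items:
  assumes A: "any_fit \<alpha> A"
  shows "run A (history_of (replicate m [full_item])) (replicate r full_item @ xs)
    = run A (history_of (replicate (m + r) [full_item])) xs"
proof (induction r arbitrary: m)
  case (Suc r)
  have "run A (history_of (replicate m [full_item])) (full_item # replicate r full_item @ xs)
      = run A (history_of (replicate m [full_item] @ [[full_item]])) (replicate r full_item @ xs)"
    using valid_items not_viable_full_full by (intro run_any_fit_opens_bin[OF A]) auto
  then show ?case using Suc[of "Suc m"] by (simp add: replicate_append_same)
qed simp

lemma run_rare_small_pairs:
  assumes A: "any_fit \<alpha> A"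
  shows "run A (history_of (replicate N [full_item] @ replicate t [rare_item \<alpha>, small_item n]))
      (concat (replicate r [rare_item \<alpha>, small_item n]))
    = history_of (replicate N [full_item] @ replicate (t + r) [rare_item \<alpha>, small_item n])"
proof (induction r arbitrary: t)
  case (Suc r)
  let ?L = "replicate N [full_item] @ replicate t [rare_item \<alpha>, small_item n]"
  let ?rest = "concat (replicate r [rare_item \<alpha>, small_item n])"
  have "run A (history_of ?L) (rare_item \<alpha> # small_item n # ?rest)
      = run A (history_of (?L @ [[rare_item \<alpha>]])) (small_item n # ?rest)"
    using not_viable_full_rare not_viable_rare_small_rare
    by (intro run_any_fit_opens_bin[OF A valid_items(2)]) auto
  also have "\<dots> = run A (history_of (?L @ [[rare_item \<alpha>] @ [small_item n]])) ?rest"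
    using not_viable_full_small not_viable_rare_small_small viable_rare_small
    by (intro run_any_fit_joins_last_bin[OF A valid_items(3)]) auto
  finally show ?case using Suc[of "Suc t"] by (simp add: replicate_append_same)
qed simp

lemma bins_used_bad_instance:
  assumes "any_fit \<alpha> A"
  shows "bins_used A (bad_instance \<alpha> n N) = N + n"
proof -
  have "run A [] (bad_instance \<alpha> n N)
    = history_of (replicate N [full_item] @ replicate n [rare_item \<alpha>, small_item n])"
    using run_full_items[OF assms, of 0 N] run_rare_small_pairs[OF assms, of N 0 n]
    by (simp add: bad_instance_def)
  then show ?thesis unfolding bins_used_def by (simp add: nbins_history_of)
qed

context
  fixes k :: nat
  assumes k: "0 < k" "4 * real k ^ 2 * \<alpha> \<le> 1"
begin

lemma viable_full_bin:
  assumes "j < N"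
  shows "viable \<alpha> (packing_bin (bad_instance \<alpha> n N) (bad_instance_packing n k N) j)"
proof (rule viable_of_small_sizes[where s = 1])
  show "real (length (packing_bin (bad_instance \<alpha> n N) (bad_instance_packing n k N) j)) * 1 \<le> 1"
    unfolding length_packing_bin unfolding length_bad_instance bad_instance_packing_full_bin[OF assms] by simp
  show "\<forall>y\<in>set (packing_bin (bad_instance \<alpha> n N) (bad_instance_packing n k N) j). snd y \<le> 1"
    using valid_item_packing_bin[OF valid_item_bad_instance] unfolding valid_item_def by blast
qed (rule valid_item_packing_bin[OF valid_item_bad_instance], use \<alpha> in simp)

lemma viable_rare_bin:
  assumes "N \<le> j" "j \<le> N + n div k"
  shows "viable \<alpha> (packing_bin (bad_instance \<alpha> n N) (bad_instance_packing n k N) j)"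
proof (rule viable_of_small_probs[where p = "2 * \<alpha>"])
  let ?C = "{i. i < N + 2 * n \<and> bad_instance_packing n k N i = j}"
  note C = bad_instance_packing_rare_bin[OF k(1) assms]
  have "card ?C \<le> k"
    using card_mono[OF finite_imageI[OF finite_atLeastLessThan] C]
      card_image_le[OF finite_atLeastLessThan, of "\<lambda>r. N + 2 * r" "(j - N) * k" "(j - N) * k + k"]
    by simp
  then have "real (card ?C) ^ 2 * (2 * \<alpha>) ^ 2 \<le> real k ^ 2 * (2 * \<alpha>) ^ 2"
    by (intro mult_right_mono power_mono) auto
  also have "\<dots> = (4 * real k ^ 2 * \<alpha>) * \<alpha>" by (simp add: power2_eq_square)
  also have "\<dots> \<le> \<alpha>" using k(2) \<alpha> by (simp add: mult_le_cancel_right1)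
  finally show "real (length (packing_bin (bad_instance \<alpha> n N) (bad_instance_packing n k N) j)) ^ 2
      * (2 * \<alpha>) ^ 2 \<le> \<alpha>"
    unfolding length_packing_bin unfolding length_bad_instance .
  show "\<forall>y\<in>set (packing_bin (bad_instance \<alpha> n N) (bad_instance_packing n k N) j). fst y \<le> 2 * \<alpha>"
    unfolding set_packing_bin unfolding length_bad_instance
    using C by (auto simp: nth_bad_instance rare_item_def)
qed (rule valid_item_packing_bin[OF valid_item_bad_instance], use \<alpha> in simp)

lemma viable_small_bin:
  "viable \<alpha> (packing_bin (bad_instance \<alpha> n N) (bad_instance_packing n k N) (N + n div k + 1))"
proof (rule viable_of_small_sizes[where s = "1 / real n"])
  let ?C = "{i. i < N + 2 * n \<and> bad_instance_packing n k N i = N + n div k + 1}"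
  note C = bad_instance_packing_small_bin[of N n k]
  have "card ?C \<le> n"
    using card_mono[OF finite_imageI[OF finite_lessThan] C]
      card_image_le[OF finite_lessThan, of "\<lambda>r. N + 2 * r + 1" n]
    by simp
  then show "real (length (packing_bin (bad_instance \<alpha> n N) (bad_instance_packing n k N) (N + n div k + 1)))
      * (1 / real n) \<le> 1"
    unfolding length_packing_bin unfolding length_bad_instance using n by (simp add: field_simps)
  show "\<forall>y\<in>set (packing_bin (bad_instance \<alpha> n N) (bad_instance_packing n k N) (N + n div k + 1)).
      snd y \<le> 1 / real n"
    unfolding set_packing_bin unfolding length_bad_instance
    using C by (auto simp: nth_bad_instance small_item_def)
qed (rule valid_item_packing_bin[OF valid_item_bad_instance], use \<alpha> in simp)

lemma viable_packing_bad_instance: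
  "viable_packing \<alpha> (bad_instance \<alpha> n N) (N + n div k + 2) (bad_instance_packing n k N)"
  unfolding viable_packing_def
proof (intro conjI allI impI)
  fix i assume "i < length (bad_instance \<alpha> n N)"
  then have "(i - N) div 2 div k \<le> n div k" by (intro div_le_mono) (auto simp: length_bad_instance)
  then show "bad_instance_packing n k N i < N + n div k + 2"
    by (auto simp: bad_instance_packing_def)
next
  fix j assume "j < N + n div k + 2"
  then consider "j < N" | "N \<le> j" "j \<le> N + n div k" | "j = N + n div k + 1" by linarith
  then show "viable \<alpha> (packing_bin (bad_instance \<alpha> n N) (bad_instance_packing n k N) j)"
    using viable_full_bin viable_rare_bin viable_small_bin by cases blast+
qed

lemma OPT_bad_instance_le: "OPT \<alpha> (bad_instance \<alpha> n N) \<le> N + n div k + 2"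
  by (rule OPT_le[OF viable_packing_bad_instance])

lemma OPT_bad_instance_ge: "N \<le> OPT \<alpha> (bad_instance \<alpha> n N)"
proof -
  have "card {..<N} \<le> OPT \<alpha> (bad_instance \<alpha> n N)"
    using \<alpha> by (intro card_le_OPT[OF viable_packing_bad_instance valid_item_bad_instance])
      (auto simp: length_bad_instance nth_bad_instance full_item_def)
  then show ?thesis by simp
qed

end

end

lemma exists_nat_near_inverse_sqrt:
  fixes \<alpha> :: real
  assumes "0 < \<alpha>" "\<alpha> \<le> 1 / 16"
  shows "\<exists>k::nat. 0 < k \<and> 4 * real k ^ 2 * \<alpha> \<le> 1 \<and> 1 \<le> 4 * sqrt \<alpha> * real k"
proof -
  define s where "s = sqrt \<alpha>"
  have s: "0 < s" "s \<le> 1 / 4" "s ^ 2 = \<alpha>"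
    using assms real_sqrt_le_mono[OF assms(2)] by (simp_all add: s_def real_sqrt_divide)
  define k where "k = nat \<lfloor>1 / (2 * s)\<rfloor>"
  have "2 \<le> 1 / (2 * s)" using s by (simp add: le_divide_eq)
  then have "real k = of_int \<lfloor>1 / (2 * s)\<rfloor>" unfolding k_def using s(1) by (intro of_nat_nat) simp
  then have k: "real k \<le> 1 / (2 * s)" "1 / (2 * s) - 1 < real k"
    using floor_correct[of "1 / (2 * s)"] by simp_all
  have "real k * (2 * s) \<le> 1" using k(1) s(1) by (simp add: le_divide_eq)
  then have "(real k * (2 * s)) ^ 2 \<le> 1" using s(1) by (simp add: power_le_one)
  then have "4 * real k ^ 2 * \<alpha> \<le> 1" by (simp add: power_mult_distrib s(3)[symmetric])
  moreover have "1 / (4 * s) < real k" using k(2) \<open>2 \<le> 1 / (2 * s)\<close> by simp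
  then have "1 \<le> 4 * s * real k" using s(1) by (simp add: divide_less_eq mult.commute)
  moreover have "0 < k" using k(2) \<open>2 \<le> 1 / (2 * s)\<close> by simp
  ultimately show ?thesis unfolding s_def by blast
qed

lemma any_fit_bad_instance_ratio:
  fixes \<alpha> :: real
  assumes \<alpha>: "0 < \<alpha>" "\<alpha> \<le> 1 / 16" and A: "any_fit \<alpha> A" and N: "0 < N"
  shows "\<exists>xs. (\<forall>x\<in>set xs. valid_item x) \<and> N \<le> OPT \<alpha> xs \<and>
    real (bins_used A xs) \<ge> 1 / 8 / sqrt \<alpha> * real (OPT \<alpha> xs)"
proof -
  define s where "s = sqrt \<alpha>"
  have s: "0 < s" "s \<le> 1" using \<alpha> by (auto simp: s_def)
  obtain k :: nat where k: "0 < k" "4 * real k ^ 2 * \<alpha> \<le> 1" "1 \<le> 4 * s * real k"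
    using exists_nat_near_inverse_sqrt[OF \<alpha>] unfolding s_def by blast
  define n where "n = (N + 2) * nat \<lceil>1 / s\<rceil>"
  have "(real N + 2) / s = (real N + 2) * (1 / s)" by simp
  also have "\<dots> \<le> (real N + 2) * real (nat \<lceil>1 / s\<rceil>)"
    by (intro mult_left_mono real_nat_ceiling_ge) auto
  finally have n_ge: "(real N + 2) / s \<le> real n" by (simp add: n_def algebra_simps)
  have "0 < (real N + 2) / s" using s by simp
  then have n: "0 < n" using n_ge by linarith
  have \<alpha>': "0 < \<alpha>" "\<alpha> < 1 / 2" using \<alpha> by auto
  let ?xs = "bad_instance \<alpha> n N"
  have "real (n div k) \<le> real n / real k" by (rule of_nat_div_le_of_nat)
  also have "\<dots> \<le> 4 * s * real n"
    using mult_left_mono[OF k(3), of "real n"] k(1) by (simp add: field_simps)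
  finally have "real (OPT \<alpha> ?xs) \<le> real N + 2 + 4 * s * real n"
    using OPT_bad_instance_le[OF \<alpha>' n k(1,2), of N] by linarith
  then have "1 / 8 / sqrt \<alpha> * real (OPT \<alpha> ?xs) \<le> (real N + 2 + 4 * s * real n) / (8 * s)"
    using s by (simp add: s_def[symmetric] divide_right_mono)
  also have "\<dots> = ((real N + 2) / s) / 8 + real n / 2"
    using s by (simp add: field_simps)
  also have "\<dots> \<le> real (bins_used A ?xs)"
    using n_ge bins_used_bad_instance[OF \<alpha>' n A] by simp
  finally show ?thesis
    using valid_item_bad_instance[OF \<alpha>' n] OPT_bad_instance_ge[OF \<alpha>' n k(1,2)] by blast
qed

theorem theorem2:
  shows "\<exists>c::real. c > 0 \<and> (\<exists>\<alpha>0::real. 0 < \<alpha>0 \<and> \<alpha>0 \<le> 1/2 \<and>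
    (\<forall>\<alpha>. 0 < \<alpha> \<and> \<alpha> \<le> \<alpha>0 \<longrightarrow>
      (\<forall>A. any_fit \<alpha> A \<longrightarrow>
        (\<forall>N::nat. 0 < N \<longrightarrow>
          (\<exists>xs. (\<forall>x\<in>set xs. valid_item x) \<and> N \<le> OPT \<alpha> xs \<and>
                real (bins_used A xs) \<ge> c / sqrt \<alpha> * real (OPT \<alpha> xs))))))"
  by (intro exI[of _ "1/8"] conjI exI[of _ "1/16"] allI impI any_fit_bad_instance_ratio) auto

end
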